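(* Consider a ReLU network with $L$ hidden layers, an input point $x \in \mathbb{R}^n$, and a convex distance function $\delta$ to $x$. Let $\mathcal{G}$ be the hierarchical search graph and let $A^x := (A^x_1)$ be the $1$-layer partial activation pattern of $x$. Then for every $l \in [L]$ and every $l$-layer partial activation pattern $A$ with $R_A \neq \emptyset$, there is a path in $\mathcal{G}$ from $A^x$ to $A$ along which the values $\operatorname{dist}(R_B)$ of the visited patterns $B$ are monotonically nondecreasing.
   Context: The ReLU network with input dimension $n$ and $n_i$ neurons in hidden layer $i$ is given by $x^0 := x$, $z^{i+1} := W^i x^i + b^i$ for $i \in \{0,\dots,L-1\}$, $x^i := \max(0, z^i)$ (entrywise) for $i \in [L]$, and output $f(x) := W^L x^L + b^L$, where $W^i, b^i$ are real weight matrices and bias vectors of compatible dimensions; $z^i_j(v)$ denotes the $j$-th preactivation of layer $i$ at input $v$. For $l \in [L]$, an $l$-layer partial activation pattern is a tuple $A = (A_1,\dots,A_l)$ of functions $A_i : [n_i] \to \{-1,+1\}$; its region is $R_A := \{ v \in \mathbb{R}^n : A_i(j)\, z^i_j(v) \ge 0 \text{ for all } i \in [l], j \in [n_i]\}$ (a closed polyhedron). The activation pattern of an input $v$ has $A^v_i(j) = +1$ if $z^i_j(v) \ge 0$ and $-1$ otherwise; the $1$-layer pattern of $x$ is $(A^x_1)$. For $l \ge 2$, $\operatorname{parent}(A_1,\dots,A_l) := (A_1,\dots,A_{l-1})$, and $A$ is a child of $\operatorname{parent}(A)$. Two $l$-layer patterns are siblings if they have the same parent (for $l=1$, all $1$-layer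 patterns are siblings), and neighboring siblings if they differ on exactly one neuron of layer $l$. A convex distance function to $x$ is a convex, continuous function $\delta : \mathbb{R}^n \to [0,\infty)$ with bounded sublevel sets and $\delta(x)=0$ (e.g. $\delta(v) = \|v - x\|_p$); for a nonempty closed set $S$, $\operatorname{dist}(S) := \min_{v \in S}\delta(v)$. The hierarchical search graph $\mathcal{G}$ has as vertices all $l$-layer partial activation patterns with nonempty region, for $l \in [L]$; it has an edge between two $l$-layer patterns whenever they are neighboring siblings, and an edge between an $(l-1)$-layer pattern $B$ and a child $A$ of $B$ (with $R_A \neq \emptyset$) whenever $R_A$ has the smallest value of $\operatorname{dist}$ among all children of $B$ with nonempty region (equivalently $\operatorname{dist}(R_A) = \operatorname{dist}(R_B)$). *)

theory Defs
  imports "HOL-Analysis.Analysis"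
begin

text \<open>A ReLU network with input space real^'n and L hidden layers.
  width i = n_i (number of neurons of hidden layer i, for i in 1..L);
  neurons are indexed 0-based, j < width i.
  W0 j :: real^'n is row j of the first weight matrix W^0, b0 j the bias b^0_j;
  W i j k is entry (j,k) of W^i (i >= 1), b i j the bias b^i_j (i >= 1).
  The output layer W^L, b^L plays no role in the statement.\<close>

fun preact :: "(nat \<Rightarrow> nat) \<Rightarrow> (nat \<Rightarrow> real^'n) \<Rightarrow> (nat \<Rightarrow> real)
      \<Rightarrow> (nat \<Rightarrow> nat \<Rightarrow> nat \<Rightarrow> real) \<Rightarrow> (nat \<Rightarrow> nat \<Rightarrow> real)
      \<Rightarrow> nat \<Rightarrow> nat \<Rightarrow> real^'n \<Rightarrow> real" where
  "preact width W0 b0 W b 0 j v = 0"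
| "preact width W0 b0 W b (Suc 0) j v = W0 j \<bullet> v + b0 j"
| "preact width W0 b0 W b (Suc (Suc i)) j v =
     (\<Sum>k<width (Suc i). W (Suc i) j k * max 0 (preact width W0 b0 W b (Suc i) k v))
     + b (Suc i) j"

text \<open>An l-layer partial activation pattern (A_1,...,A_l) is a list of length l;
  entry number i (0-based) is A_{i+1} : [n_{i+1}] -> {-1,+1}, extended by 0
  outside its domain so that equality of patterns is equality of lists.\<close>

definition is_pattern :: "nat \<Rightarrow> (nat \<Rightarrow> nat) \<Rightarrow> (nat \<Rightarrow> int) list \<Rightarrow> bool" where
  "is_pattern L width A \<longleftrightarrow> 1 \<le> length A \<and> length A \<le> L \<and>
     (\<forall>i<length A. \<forall>j. (j < width (Suc i) \<longrightarrow> (A ! i) j \<in> {-1, 1}) \<and>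
                         (\<not> j < width (Suc i) \<longrightarrow> (A ! i) j = 0))"

definition region :: "(nat \<Rightarrow> nat) \<Rightarrow> (nat \<Rightarrow> real^'n) \<Rightarrow> (nat \<Rightarrow> real)
      \<Rightarrow> (nat \<Rightarrow> nat \<Rightarrow> nat \<Rightarrow> real) \<Rightarrow> (nat \<Rightarrow> nat \<Rightarrow> real)
      \<Rightarrow> (nat \<Rightarrow> int) list \<Rightarrow> (real^'n) set" where
  "region width W0 b0 W b A = {v. \<forall>i<length A. \<forall>j<width (Suc i).
       real_of_int ((A ! i) j) * preact width W0 b0 W b (Suc i) j v \<ge> 0}"

definition pattern1_of :: "(nat \<Rightarrow> nat) \<Rightarrow> (nat \<Rightarrow> real^'n) \<Rightarrow> (nat \<Rightarrow> real)
      \<Rightarrow> (nat \<Rightarrow> nat \<Rightarrow> nat \<Rightarrow> real) \<Rightarrow> (nat \<Rightarrow> nat \<Rightarrow> real)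
      \<Rightarrow> real^'n \<Rightarrow> (nat \<Rightarrow> int) list" where
  "pattern1_of width W0 b0 W b x =
     [\<lambda>j. if j < width 1 then (if preact width W0 b0 W b 1 j x \<ge> 0 then 1 else -1) else 0]"

definition convex_distance_function :: "(real^'n \<Rightarrow> real) \<Rightarrow> real^'n \<Rightarrow> bool" where
  "convex_distance_function \<delta> x \<longleftrightarrow> convex_on UNIV \<delta> \<and> continuous_on UNIV \<delta> \<and>
     (\<forall>v. 0 \<le> \<delta> v) \<and> (\<forall>c. bounded {v. \<delta> v \<le> c}) \<and> \<delta> x = 0"

text \<open>dist(S) = min over S of delta; for nonempty closed S the minimum is attained,
  so it equals the infimum used here.\<close>
definition dist_set :: "(real^'n \<Rightarrow> real) \<Rightarrow> (real^'n) set \<Rightarrow> real" where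
  "dist_set \<delta> S = Inf (\<delta> ` S)"

text \<open>Parent of a pattern (for length >= 2) is dropping the last layer.
  Siblings: same length and same parent (for length 1 both parents are []).\<close>
definition siblings :: "(nat \<Rightarrow> int) list \<Rightarrow> (nat \<Rightarrow> int) list \<Rightarrow> bool" where
  "siblings A B \<longleftrightarrow> length A = length B \<and> butlast A = butlast B"

definition neighboring_siblings :: "(nat \<Rightarrow> nat) \<Rightarrow> (nat \<Rightarrow> int) list \<Rightarrow> (nat \<Rightarrow> int) list \<Rightarrow> bool" where
  "neighboring_siblings width A B \<longleftrightarrow> siblings A B \<and>
     card {j. j < width (length A) \<and> (last A) j \<noteq> (last B) j} = 1"

definition hvertex :: "nat \<Rightarrow> (nat \<Rightarrow> nat) \<Rightarrow> (nat \<Rightarrow> real^'n) \<Rightarrow> (nat \<Rightarrow> real)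
      \<Rightarrow> (nat \<Rightarrow> nat \<Rightarrow> nat \<Rightarrow> real) \<Rightarrow> (nat \<Rightarrow> nat \<Rightarrow> real)
      \<Rightarrow> (nat \<Rightarrow> int) list \<Rightarrow> bool" where
  "hvertex L width W0 b0 W b A \<longleftrightarrow> is_pattern L width A \<and> region width W0 b0 W b A \<noteq> {}"

definition tree_edge :: "nat \<Rightarrow> (nat \<Rightarrow> nat) \<Rightarrow> (nat \<Rightarrow> real^'n) \<Rightarrow> (nat \<Rightarrow> real)
      \<Rightarrow> (nat \<Rightarrow> nat \<Rightarrow> nat \<Rightarrow> real) \<Rightarrow> (nat \<Rightarrow> nat \<Rightarrow> real) \<Rightarrow> (real^'n \<Rightarrow> real)
      \<Rightarrow> (nat \<Rightarrow> int) list \<Rightarrow> (nat \<Rightarrow> int) list \<Rightarrow> bool" where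
  "tree_edge L width W0 b0 W b \<delta> B A \<longleftrightarrow>
     hvertex L width W0 b0 W b B \<and> hvertex L width W0 b0 W b A \<and>
     2 \<le> length A \<and> butlast A = B \<and>
     (\<forall>C. hvertex L width W0 b0 W b C \<and> 2 \<le> length C \<and> butlast C = B \<longrightarrow>
        dist_set \<delta> (region width W0 b0 W b A) \<le> dist_set \<delta> (region width W0 b0 W b C))"

definition hedge :: "nat \<Rightarrow> (nat \<Rightarrow> nat) \<Rightarrow> (nat \<Rightarrow> real^'n) \<Rightarrow> (nat \<Rightarrow> real)
      \<Rightarrow> (nat \<Rightarrow> nat \<Rightarrow> nat \<Rightarrow> real) \<Rightarrow> (nat \<Rightarrow> nat \<Rightarrow> real) \<Rightarrow> (real^'n \<Rightarrow> real)
      \<Rightarrow> (nat \<Rightarrow> int) list \<Rightarrow> (nat \<Rightarrow> int) list \<Rightarrow> bool" where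
  "hedge L width W0 b0 W b \<delta> A B \<longleftrightarrow>
     (hvertex L width W0 b0 W b A \<and> hvertex L width W0 b0 W b B \<and> neighboring_siblings width A B)
     \<or> tree_edge L width W0 b0 W b \<delta> A B \<or> tree_edge L width W0 b0 W b \<delta> B A"

definition hpath :: "nat \<Rightarrow> (nat \<Rightarrow> nat) \<Rightarrow> (nat \<Rightarrow> real^'n) \<Rightarrow> (nat \<Rightarrow> real)
      \<Rightarrow> (nat \<Rightarrow> nat \<Rightarrow> nat \<Rightarrow> real) \<Rightarrow> (nat \<Rightarrow> nat \<Rightarrow> real) \<Rightarrow> (real^'n \<Rightarrow> real)
      \<Rightarrow> (nat \<Rightarrow> int) list list \<Rightarrow> bool" where
  "hpath L width W0 b0 W b \<delta> p \<longleftrightarrow> p \<noteq> [] \<and>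
     (\<forall>B\<in>set p. hvertex L width W0 b0 W b B) \<and>
     (\<forall>i. Suc i < length p \<longrightarrow> hedge L width W0 b0 W b \<delta> (p ! i) (p ! Suc i))"

end

theory Submission imports Defs begin

text \<open>On the region R_B of an (l-1)-layer pattern B no neuron of the first l-1 layers changes
  state, so R_B is convex and every preactivation of layer l is affine on it; the children of B
  are the sign cells of these affine functions. If q minimises \<delta> on R_B, the child containing q
  attains dist(R_B), hence hangs off B by a tree edge. Any other nonempty child, with minimiser y,
  is reached from it by single-neuron flips: at the last layer-l hyperplane on which the segment
  from q to y changes a disagreeing sign, the crossing point u has \<delta> u \<le> \<delta> y by convexity, and
  flipping that neuron gives a neighbouring sibling that is one disagreement closer to the sign
  vector of q and whose distance is at most \<delta> y. Induction on the number of disagreements and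
  then on l gives the monotone path; for l = 1 the input x itself minimises \<delta>.\<close>

lemma coercive_attains_min_on_closed:
  fixes \<delta> :: "'a::heine_borel \<Rightarrow> real"
  assumes "closed S" "S \<noteq> {}" "continuous_on UNIV \<delta>" "\<And>c. bounded {v. \<delta> v \<le> c}"
  shows "\<exists>q\<in>S. \<forall>v\<in>S. \<delta> q \<le> \<delta> v"
proof -
  obtain s where s: "s \<in> S" using assms(2) by auto
  let ?K = "S \<inter> {v. \<delta> v \<le> \<delta> s}"
  have "closed {v. \<delta> v \<le> \<delta> s}"
    using assms(3) by (intro closed_Collect_le) (auto intro: continuous_on_const)
  then have "closed ?K" using assms(1) by (intro closed_Int)
  moreover have "bounded ?K" using assms(4) by (rule bounded_subset) auto
  ultimately have "compact ?K" by (simp add: compact_eq_bounded_closed)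
  moreover have "?K \<noteq> {}" using s by auto
  moreover have "continuous_on ?K \<delta>" using assms(3) by (rule continuous_on_subset) simp
  ultimately have "\<exists>q\<in>?K. \<forall>v\<in>?K. \<delta> q \<le> \<delta> v" by (rule continuous_attains_inf)
  then obtain q where q: "q \<in> ?K" "\<And>v. v \<in> ?K \<Longrightarrow> \<delta> q \<le> \<delta> v" by blast
  have "\<delta> q \<le> \<delta> v" if "v \<in> S" for v
    using q that by (cases "\<delta> v \<le> \<delta> s") auto
  with q(1) show ?thesis by blast
qed

lemma dist_set_eq_minimum:
  assumes "q \<in> S" "\<And>v. v \<in> S \<Longrightarrow> \<delta> q \<le> \<delta> v"
  shows "dist_set \<delta> S = \<delta> q"
  unfolding dist_set_def using assms by (intro cInf_eq_minimum) auto

lemma dist_set_le: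
  assumes "v \<in> S" "\<And>u. u \<in> S \<Longrightarrow> m \<le> \<delta> u"
  shows "dist_set \<delta> S \<le> \<delta> v"
  unfolding dist_set_def using assms by (intro cInf_lower bdd_belowI2) auto

lemma dist_set_greatest:
  assumes "S \<noteq> {}" "\<And>v. v \<in> S \<Longrightarrow> m \<le> \<delta> v"
  shows "m \<le> dist_set \<delta> S"
  unfolding dist_set_def using assms by (intro cInf_greatest) auto

lemma last_root_among_segments:
  fixes g0 g1 :: "'i \<Rightarrow> real"
  assumes "finite D" "D \<noteq> {}" and sign: "\<And>j. j \<in> D \<Longrightarrow> g0 j \<le> 0 \<and> 0 \<le> g1 j"
  shows "\<exists>j0\<in>D. \<exists>t. 0 \<le> t \<and> t \<le> 1 \<and> (1 - t) * g0 j0 + t * g1 j0 = 0 \<and>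
    (\<forall>j\<in>D. 0 \<le> (1 - t) * g0 j + t * g1 j)"
proof -
  define r where "r j = (if g0 j = g1 j then 0 else g0 j / (g0 j - g1 j))" for j
  have r_root: "(1 - r j) * g0 j + r j * g1 j = 0" and r01: "0 \<le> r j" "r j \<le> 1"
    if "j \<in> D" for j
    using sign[OF that] by (auto simp: r_def field_simps)
  define t where "t = Max (r ` D)"
  have "t \<in> r ` D" unfolding t_def using assms(1,2) by (intro Max_in) auto
  then obtain j0 where j0: "j0 \<in> D" "r j0 = t" by auto
  have nonneg: "0 \<le> (1 - t) * g0 j + t * g1 j" if "j \<in> D" for j
  proof -
    have "r j \<le> t" using assms(1) that unfolding t_def by simp
    then have "r j * (g1 j - g0 j) \<le> t * (g1 j - g0 j)"
      using sign[OF that] by (intro mult_right_mono) auto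
    then show ?thesis using r_root[OF that] by (simp add: algebra_simps)
  qed
  have "0 \<le> t" "t \<le> 1" "(1 - t) * g0 j0 + t * g1 j0 = 0"
    using r01 r_root j0 by auto
  then show ?thesis using j0(1) nonneg by blast
qed

lemma max_zero_convex_combination:
  fixes p p' t :: real
  assumes "0 \<le> p * p'" "0 \<le> t" "t \<le> 1"
  shows "max 0 ((1 - t) * p + t * p') = (1 - t) * max 0 p + t * max 0 p'"
proof (cases "0 \<le> p \<and> 0 \<le> p'")
  case True
  then show ?thesis using assms by (simp add: max_def)
next
  case False
  with assms(1) have "p \<le> 0" "p' \<le> 0" by (auto simp: zero_le_mult_iff)
  then have "(1 - t) * p + t * p' \<le> 0"
    using assms(2,3) by (simp add: add_nonpos_nonpos mult_nonneg_nonpos)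
  then show ?thesis using \<open>p \<le> 0\<close> \<open>p' \<le> 0\<close> by (simp add: max_def)
qed

definition sign_cell :: "'v set \<Rightarrow> (nat \<Rightarrow> 'v \<Rightarrow> real) \<Rightarrow> nat \<Rightarrow> (nat \<Rightarrow> int) \<Rightarrow> 'v set" where
  "sign_cell S z w a = S \<inter> {v. \<forall>j<w. 0 \<le> real_of_int (a j) * z j v}"

definition sign_vector :: "nat \<Rightarrow> (nat \<Rightarrow> int) \<Rightarrow> bool" where
  "sign_vector w a \<longleftrightarrow> (\<forall>j. (j < w \<longrightarrow> a j \<in> {-1, 1}) \<and> (\<not> j < w \<longrightarrow> a j = 0))"

definition sign_pattern :: "(nat \<Rightarrow> 'v \<Rightarrow> real) \<Rightarrow> nat \<Rightarrow> 'v \<Rightarrow> nat \<Rightarrow> int" where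
  "sign_pattern z w q j = (if j < w then if 0 \<le> z j q then 1 else -1 else 0)"

lemma sign_vector_sign_pattern: "sign_vector w (sign_pattern z w q)"
  by (simp add: sign_vector_def sign_pattern_def)

lemma mem_sign_cell_sign_pattern: "q \<in> S \<Longrightarrow> q \<in> sign_cell S z w (sign_pattern z w q)"
  by (simp add: sign_cell_def sign_pattern_def)

lemma sign_cell_subset: "sign_cell S z w a \<subseteq> S"
  by (simp add: sign_cell_def)

lemma convex_sign_cell:
  assumes "convex S"
    and "\<And>j u v t. j < w \<Longrightarrow> u \<in> S \<Longrightarrow> v \<in> S \<Longrightarrow> 0 \<le> t \<Longrightarrow> t \<le> 1 \<Longrightarrow>
        z j ((1 - t) *\<^sub>R u + t *\<^sub>R v) = (1 - t) * z j u + t * z j v"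
  shows "convex (sign_cell S z w a)"
  unfolding convex_alt
proof (intro ballI allI impI)
  fix u v and t :: real
  assume u: "u \<in> sign_cell S z w a" and v: "v \<in> sign_cell S z w a" and t: "0 \<le> t \<and> t \<le> 1"
  define m where "m = (1 - t) *\<^sub>R u + t *\<^sub>R v"
  have "0 \<le> real_of_int (a j) * z j m" if "j < w" for j
  proof -
    have zm: "z j m = (1 - t) * z j u + t * z j v"
      using assms(2)[OF that, of u v t] u v t by (simp add: sign_cell_def m_def)
    have "real_of_int (a j) * z j m
        = (1 - t) * (real_of_int (a j) * z j u) + t * (real_of_int (a j) * z j v)"
      unfolding zm by (simp add: algebra_simps)
    also have "\<dots> \<ge> 0" using u v t that by (simp add: sign_cell_def)
    finally show ?thesis .
  qed
  moreover have "m \<in> S"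
    using assms(1) u v t by (simp add: sign_cell_def convex_alt m_def)
  ultimately show "(1 - t) *\<^sub>R u + t *\<^sub>R v \<in> sign_cell S z w a"
    by (simp add: sign_cell_def m_def)
qed

locale affine_sign_arrangement =
  fixes S :: "(real^'n) set" and z :: "nat \<Rightarrow> real^'n \<Rightarrow> real" and w :: nat
    and \<delta> :: "real^'n \<Rightarrow> real" and q :: "real^'n"
  assumes closed: "closed S" and convex: "convex S"
    and continuous: "\<And>j. j < w \<Longrightarrow> continuous_on UNIV (z j)"
    and affine: "\<And>j u v t. j < w \<Longrightarrow> u \<in> S \<Longrightarrow> v \<in> S \<Longrightarrow> 0 \<le> t \<Longrightarrow> t \<le> 1 \<Longrightarrow>
        z j ((1 - t) *\<^sub>R u + t *\<^sub>R v) = (1 - t) * z j u + t * z j v"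
    and convex_\<delta>: "convex_on UNIV \<delta>" and continuous_\<delta>: "continuous_on UNIV \<delta>"
    and coercive_\<delta>: "\<And>c. bounded {v. \<delta> v \<le> c}"
    and minimizer: "q \<in> S" "\<And>v. v \<in> S \<Longrightarrow> \<delta> q \<le> \<delta> v"
begin

abbreviation disagreement :: "(nat \<Rightarrow> int) \<Rightarrow> nat set" where
  "disagreement a \<equiv> {j. j < w \<and> a j \<noteq> sign_pattern z w q j}"

lemma finite_disagreement: "finite (disagreement a)"
  by (rule finite_subset[of _ "{..<w}"]) auto

lemma closed_sign_cell: "closed (sign_cell S z w a)"
proof -
  have eq: "sign_cell S z w a = S \<inter> (\<Inter>j<w. {v. 0 \<le> real_of_int (a j) * z j v})"
    unfolding sign_cell_def by auto
  have "closed {v. 0 \<le> real_of_int (a j) * z j v}" if "j < w" for j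
    using continuous[OF that] by (intro closed_Collect_le continuous_intros) auto
  then show ?thesis unfolding eq using closed by (intro closed_Int closed_INT) auto
qed

text \<open>u is the point where the segment from q to y last crosses a hyperplane z j0 = 0 with
  j0 in the disagreement of a; it keeps all signs of a except at j0, where it is zero.\<close>
lemma flip_toward_minimizer:
  assumes a: "sign_vector w a" and y: "y \<in> sign_cell S z w a" and D: "disagreement a \<noteq> {}"
  obtains j0 u where "j0 \<in> disagreement a"
    "u \<in> sign_cell S z w (a(j0 := sign_pattern z w q j0))" "\<delta> u \<le> \<delta> y"
proof -
  define g0 where "g0 j = real_of_int (a j) * z j q" for j
  define g1 where "g1 j = real_of_int (a j) * z j y" for j
  have yS: "y \<in> S" and g1: "\<And>j. j < w \<Longrightarrow> 0 \<le> g1 j"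
    using y unfolding sign_cell_def g1_def by auto
  have g0: "g0 j \<le> 0 \<and> 0 \<le> g1 j" if "j \<in> disagreement a" for j
    using that a g1 unfolding g0_def sign_pattern_def sign_vector_def
    by (auto split: if_splits)
  obtain j0 t where j0: "j0 \<in> disagreement a" and t: "0 \<le> t" "t \<le> 1"
    and root: "(1 - t) * g0 j0 + t * g1 j0 = 0"
    and nonneg: "\<forall>j\<in>disagreement a. 0 \<le> (1 - t) * g0 j + t * g1 j"
    using last_root_among_segments[OF finite_disagreement D g0] by fastforce
  define u where "u = (1 - t) *\<^sub>R q + t *\<^sub>R y"
  have uS: "u \<in> S" unfolding u_def using convex minimizer(1) yS t by (simp add: convexD_alt)
  have gu: "real_of_int (a j) * z j u = (1 - t) * g0 j + t * g1 j" if "j < w" for j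
  proof -
    have e: "z j u = (1 - t) * z j q + t * z j y"
      using affine[OF that minimizer(1) yS t] by (simp add: u_def)
    show ?thesis unfolding g0_def g1_def e by (simp add: algebra_simps)
  qed
  have "0 \<le> real_of_int (a j) * z j u" if "j < w" for j
  proof (cases "j \<in> disagreement a")
    case False
    with that have "0 \<le> g0 j" unfolding g0_def sign_pattern_def by auto
    then show ?thesis using gu[OF that] g1[OF that] t by simp
  qed (use gu[OF that] nonneg in simp)
  moreover have "z j0 u = 0"
    using gu[of j0] root j0 a unfolding sign_vector_def by auto
  ultimately have "u \<in> sign_cell S z w (a(j0 := sign_pattern z w q j0))"
    using uS unfolding sign_cell_def by auto
  moreover have "\<delta> u \<le> \<delta> y"
  proof -
    have "\<delta> u \<le> (1 - t) * \<delta> q + t * \<delta> y"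
      unfolding u_def using convex_onD[OF convex_\<delta>] t by auto
    also have "\<dots> \<le> (1 - t) * \<delta> y + t * \<delta> y"
      using minimizer(2)[OF yS] t by (intro add_right_mono mult_left_mono) auto
    also have "\<dots> = \<delta> y" by (simp add: algebra_simps)
    finally show ?thesis .
  qed
  ultimately show thesis by (rule that[OF j0])
qed

text \<open>The neuron to flip depends on the chosen point of the cell, so it is chosen at a
  minimiser of \<delta> on the cell.\<close>
lemma dist_set_flip_le:
  assumes a: "sign_vector w a" and ne: "sign_cell S z w a \<noteq> {}" and D: "disagreement a \<noteq> {}"
  obtains j0 where "j0 \<in> disagreement a"
    "sign_cell S z w (a(j0 := sign_pattern z w q j0)) \<noteq> {}"
    "dist_set \<delta> (sign_cell S z w (a(j0 := sign_pattern z w q j0)))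
       \<le> dist_set \<delta> (sign_cell S z w a)"
proof -
  obtain y where y: "y \<in> sign_cell S z w a" "\<And>v. v \<in> sign_cell S z w a \<Longrightarrow> \<delta> y \<le> \<delta> v"
    using coercive_attains_min_on_closed[OF closed_sign_cell ne continuous_\<delta> coercive_\<delta>] by blast
  obtain j0 u where j0: "j0 \<in> disagreement a"
    and u: "u \<in> sign_cell S z w (a(j0 := sign_pattern z w q j0))" "\<delta> u \<le> \<delta> y"
    using flip_toward_minimizer[OF a y(1) D] .
  have "dist_set \<delta> (sign_cell S z w (a(j0 := sign_pattern z w q j0))) \<le> \<delta> u"
    using minimizer(2) by (intro dist_set_le[OF u(1), of "\<delta> q"]) (auto simp: sign_cell_def)
  also have "\<dots> \<le> dist_set \<delta> (sign_cell S z w a)"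
    using u(2) dist_set_eq_minimum[of y _ \<delta>, OF y] by simp
  finally have "dist_set \<delta> (sign_cell S z w (a(j0 := sign_pattern z w q j0)))
      \<le> dist_set \<delta> (sign_cell S z w a)" .
  then show thesis using u(1) by (intro that[OF j0]) auto
qed

definition ascending_flip :: "(nat \<Rightarrow> int) \<Rightarrow> (nat \<Rightarrow> int) \<Rightarrow> bool" where
  "ascending_flip c c' \<longleftrightarrow> card {j. j < w \<and> c j \<noteq> c' j} = 1 \<and>
     dist_set \<delta> (sign_cell S z w c) \<le> dist_set \<delta> (sign_cell S z w c')"

lemma ascending_flip_path:
  assumes "sign_vector w a" "sign_cell S z w a \<noteq> {}"
  shows "\<exists>cs. cs \<noteq> [] \<and> hd cs = sign_pattern z w q \<and> last cs = a \<and>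
    (\<forall>c\<in>set cs. sign_vector w c \<and> sign_cell S z w c \<noteq> {}) \<and>
    successively ascending_flip cs"
  using assms
proof (induction "card (disagreement a)" arbitrary: a)
  case 0
  with finite_disagreement have "disagreement a = {}" by simp
  with 0 have "a = sign_pattern z w q"
    by (auto simp: fun_eq_iff sign_vector_def sign_pattern_def)
  with 0 show ?case by (intro exI[of _ "[a]"]) auto
next
  case (Suc n a)
  have D: "disagreement a \<noteq> {}"
  proof
    assume "disagreement a = {}"
    then have "card (disagreement a) = 0" by (simp only: card.empty)
    with Suc.hyps(2) show False by simp
  qed
  obtain j0 where j0: "j0 \<in> disagreement a"
    and ne: "sign_cell S z w (a(j0 := sign_pattern z w q j0)) \<noteq> {}"
    and le: "dist_set \<delta> (sign_cell S z w (a(j0 := sign_pattern z w q j0)))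
       \<le> dist_set \<delta> (sign_cell S z w a)"
    using dist_set_flip_le[OF Suc.prems D] .
  define b where "b = a(j0 := sign_pattern z w q j0)"
  have b: "sign_vector w b"
    using Suc.prems(1) j0 unfolding b_def sign_vector_def sign_pattern_def by auto
  have "disagreement b = disagreement a - {j0}" unfolding b_def by auto
  then have card_b: "n = card (disagreement b)"
    using Suc.hyps(2) j0 by (simp add: card_Diff_singleton)
  have ne_b: "sign_cell S z w b \<noteq> {}" using ne unfolding b_def .
  obtain cs where "cs \<noteq> []" "hd cs = sign_pattern z w q" "last cs = b"
    "\<forall>c\<in>set cs. sign_vector w c \<and> sign_cell S z w c \<noteq> {}"
    "successively ascending_flip cs"
    using Suc.hyps(1)[OF card_b b ne_b] by (elim exE conjE)
  moreover have "{j. j < w \<and> b j \<noteq> a j} = {j0}" using j0 unfolding b_def by auto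
  ultimately show ?case using Suc.prems le unfolding b_def
    by (intro exI[of _ "cs @ [a]"]) (auto simp: successively_append_iff ascending_flip_def)
qed

end

definition pattern_valid :: "(nat \<Rightarrow> nat) \<Rightarrow> (nat \<Rightarrow> int) list \<Rightarrow> bool" where
  "pattern_valid width P \<longleftrightarrow> (\<forall>i<length P. sign_vector (width (Suc i)) (P ! i))"

lemma is_pattern_iff:
  "is_pattern L width A \<longleftrightarrow> 1 \<le> length A \<and> length A \<le> L \<and> pattern_valid width A"
  unfolding is_pattern_def pattern_valid_def sign_vector_def by blast

lemma pattern_valid_snoc:
  "pattern_valid width (P @ [c]) \<longleftrightarrow> pattern_valid width P \<and> sign_vector (width (Suc (length P))) c"
  unfolding pattern_valid_def by (auto simp: nth_append less_Suc_eq)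

context
  fixes width :: "nat \<Rightarrow> nat" and W0 :: "nat \<Rightarrow> real^'n" and b0 :: "nat \<Rightarrow> real"
    and W :: "nat \<Rightarrow> nat \<Rightarrow> nat \<Rightarrow> real" and b :: "nat \<Rightarrow> nat \<Rightarrow> real"
begin

lemma continuous_preact: "continuous_on UNIV (preact width W0 b0 W b i j)"
proof (induction i arbitrary: j rule: less_induct)
  case (less i)
  consider "i = 0" | "i = 1" | m where "i = Suc (Suc m)"
    by (metis One_nat_def not0_implies_Suc)
  then show ?case
  proof cases
    case 1
    then have "preact width W0 b0 W b i j = (\<lambda>v. 0)" by (simp add: fun_eq_iff)
    then show ?thesis by (simp only: continuous_on_const)
  next
    case 2
    then have "preact width W0 b0 W b i j = (\<lambda>v. W0 j \<bullet> v + b0 j)" by (simp add: fun_eq_iff)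
    then show ?thesis by (simp only:) (intro continuous_intros)
  next
    case (3 m)
    then have IH: "continuous_on UNIV (preact width W0 b0 W b (Suc m) k)" for k
      using less by simp
    from 3 have "preact width W0 b0 W b i j = (\<lambda>v. (\<Sum>k<width (Suc m).
        W (Suc m) j k * max 0 (preact width W0 b0 W b (Suc m) k v)) + b (Suc m) j)"
      by (simp add: fun_eq_iff)
    then show ?thesis by (simp only:) (intro continuous_intros IH)
  qed
qed

lemma closed_region: "closed (region width W0 b0 W b A)"
proof -
  have "region width W0 b0 W b A = (\<Inter>i<length A. \<Inter>j<width (Suc i).
      {v. 0 \<le> real_of_int ((A ! i) j) * preact width W0 b0 W b (Suc i) j v})"
    unfolding region_def by auto
  moreover have "closed {v. 0 \<le> real_of_int ((A ! i) j) * preact width W0 b0 W b (Suc i) j v}"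
    for i j by (intro closed_Collect_le continuous_intros continuous_preact)
  ultimately show ?thesis by (simp add: closed_INT)
qed

lemma region_Nil: "region width W0 b0 W b [] = UNIV"
  by (simp add: region_def)

lemma region_snoc: "region width W0 b0 W b (P @ [c]) =
   sign_cell (region width W0 b0 W b P) (preact width W0 b0 W b (Suc (length P)))
     (width (Suc (length P))) c"
  unfolding region_def sign_cell_def by (auto simp: nth_append less_Suc_eq)

lemma preact_same_sign:
  assumes "pattern_valid width P" "u \<in> region width W0 b0 W b P" "v \<in> region width W0 b0 W b P"
    and "m < length P" "k < width (Suc m)"
  shows "0 \<le> preact width W0 b0 W b (Suc m) k u * preact width W0 b0 W b (Suc m) k v"
proof -
  have c: "(P ! m) k \<in> {-1, 1}"
    using assms(1,4,5) unfolding pattern_valid_def sign_vector_def by blast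
  have "0 \<le> real_of_int ((P ! m) k) * preact width W0 b0 W b (Suc m) k u"
    "0 \<le> real_of_int ((P ! m) k) * preact width W0 b0 W b (Suc m) k v"
    using assms(2-5) unfolding region_def by auto
  with c show ?thesis by (auto simp: zero_le_mult_iff)
qed

lemma preact_affine_on_region:
  assumes P: "pattern_valid width P"
    and u: "u \<in> region width W0 b0 W b P" and v: "v \<in> region width W0 b0 W b P"
    and t: "0 \<le> t" "t \<le> 1" and i: "i \<le> Suc (length P)"
  shows "preact width W0 b0 W b i j ((1 - t) *\<^sub>R u + t *\<^sub>R v)
    = (1 - t) * preact width W0 b0 W b i j u + t * preact width W0 b0 W b i j v"
  using i
proof (induction i arbitrary: j rule: less_induct)
  case (less i)
  consider "i = 0" | "i = 1" | m where "i = Suc (Suc m)"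
    by (metis One_nat_def not0_implies_Suc)
  then show ?case
  proof cases
    case 2
    then show ?thesis by (simp add: algebra_simps)
  next
    case (3 m)
    let ?z = "preact width W0 b0 W b (Suc m)"
    let ?sum = "\<lambda>y. \<Sum>k<width (Suc m). W (Suc m) j k * max 0 (?z k y)"
    define mid where "mid = (1 - t) *\<^sub>R u + t *\<^sub>R v"
    have m: "m < length P" using 3 less.prems by simp
    have "W (Suc m) j k * max 0 (?z k mid)
        = (1 - t) * (W (Suc m) j k * max 0 (?z k u)) + t * (W (Suc m) j k * max 0 (?z k v))"
      if "k < width (Suc m)" for k
    proof -
      have mx: "max 0 (?z k mid) = (1 - t) * max 0 (?z k u) + t * max 0 (?z k v)"
        using less.IH[of "Suc m" k] 3 less.prems preact_same_sign[OF P u v m that] t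
        by (simp add: max_zero_convex_combination mid_def)
      show ?thesis unfolding mx by (simp add: algebra_simps)
    qed
    then have "?sum mid = (1 - t) * ?sum u + t * ?sum v"
      unfolding sum_distrib_left sum.distrib[symmetric] by (intro sum.cong) simp_all
    then show ?thesis unfolding mid_def[symmetric] using 3 by (simp add: algebra_simps)
  qed simp
qed

lemma convex_region: "pattern_valid width P \<Longrightarrow> convex (region width W0 b0 W b P)"
proof (induction P rule: rev_induct)
  case Nil
  then show ?case by (simp add: region_Nil)
next
  case (snoc c P)
  then have "pattern_valid width P" by (simp add: pattern_valid_snoc)
  with snoc show ?case
    unfolding region_snoc by (intro convex_sign_cell preact_affine_on_region) auto
qed

definition child_pattern :: "(nat \<Rightarrow> int) list \<Rightarrow> real^'n \<Rightarrow> (nat \<Rightarrow> int) list" where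
  "child_pattern P v = P @ [sign_pattern (preact width W0 b0 W b (Suc (length P)))
     (width (Suc (length P))) v]"

lemma pattern1_of_eq_child_pattern: "pattern1_of width W0 b0 W b x = child_pattern [] x"
  by (simp add: pattern1_of_def child_pattern_def sign_pattern_def fun_eq_iff)

lemma mem_region_child_pattern:
  "v \<in> region width W0 b0 W b P \<Longrightarrow> v \<in> region width W0 b0 W b (child_pattern P v)"
  unfolding child_pattern_def region_snoc by (rule mem_sign_cell_sign_pattern)

lemma affine_sign_arrangement_region:
  assumes "pattern_valid width P" "convex_on UNIV \<delta>" "continuous_on UNIV \<delta>"
    "\<And>c. bounded {v. \<delta> v \<le> c}"
    "q \<in> region width W0 b0 W b P" "\<And>v. v \<in> region width W0 b0 W b P \<Longrightarrow> \<delta> q \<le> \<delta> v"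
  shows "affine_sign_arrangement (region width W0 b0 W b P)
    (preact width W0 b0 W b (Suc (length P))) (width (Suc (length P))) \<delta> q"
  using assms
  by unfold_locales
    (auto simp: closed_region convex_region continuous_preact preact_affine_on_region)

end

lemma neighboring_siblings_snoc:
  "neighboring_siblings width (P @ [c]) (P @ [c']) \<longleftrightarrow>
     card {j. j < width (Suc (length P)) \<and> c j \<noteq> c' j} = 1"
  by (simp add: neighboring_siblings_def siblings_def)

context
  fixes L :: nat and width :: "nat \<Rightarrow> nat" and W0 :: "nat \<Rightarrow> real^'n" and b0 :: "nat \<Rightarrow> real"
    and W :: "nat \<Rightarrow> nat \<Rightarrow> nat \<Rightarrow> real" and b :: "nat \<Rightarrow> nat \<Rightarrow> real"
    and \<delta> :: "real^'n \<Rightarrow> real"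
begin

definition ascending_path :: "(nat \<Rightarrow> int) list list \<Rightarrow> bool" where
  "ascending_path p \<longleftrightarrow> p \<noteq> [] \<and> (\<forall>B\<in>set p. hvertex L width W0 b0 W b B) \<and>
     successively (\<lambda>B C. hedge L width W0 b0 W b \<delta> B C \<and>
       dist_set \<delta> (region width W0 b0 W b B) \<le> dist_set \<delta> (region width W0 b0 W b C)) p"

lemma ascending_path_append:
  assumes "ascending_path p" "ascending_path p'"
    and "hedge L width W0 b0 W b \<delta> (last p) (hd p')"
    and "dist_set \<delta> (region width W0 b0 W b (last p)) \<le> dist_set \<delta> (region width W0 b0 W b (hd p'))"
  shows "ascending_path (p @ p')"
  using assms unfolding ascending_path_def by (auto simp: successively_append_iff)

lemma hvertex_snoc:
  "hvertex L width W0 b0 W b (P @ [c]) \<longleftrightarrow> length P < L \<and> pattern_valid width P \<and>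
     sign_vector (width (Suc (length P))) c \<and> region width W0 b0 W b (P @ [c]) \<noteq> {}"
  by (auto simp: hvertex_def is_pattern_iff pattern_valid_snoc)

lemma tree_edge_child_pattern:
  assumes "hvertex L width W0 b0 W b P" "length P < L"
    and q: "q \<in> region width W0 b0 W b P" "\<And>v. v \<in> region width W0 b0 W b P \<Longrightarrow> \<delta> q \<le> \<delta> v"
  shows "tree_edge L width W0 b0 W b \<delta> P (child_pattern width W0 b0 W b P q)"
    and "dist_set \<delta> (region width W0 b0 W b (child_pattern width W0 b0 W b P q))
       = dist_set \<delta> (region width W0 b0 W b P)"
proof -
  let ?C = "child_pattern width W0 b0 W b P q"
  have sub: "region width W0 b0 W b (P @ [c]) \<subseteq> region width W0 b0 W b P" for c
    unfolding region_snoc by (rule sign_cell_subset)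
  have qC: "q \<in> region width W0 b0 W b ?C" using mem_region_child_pattern[OF q(1)] .
  have dist_C: "dist_set \<delta> (region width W0 b0 W b ?C) = \<delta> q"
    using qC q(2) sub unfolding child_pattern_def by (blast intro: dist_set_eq_minimum)
  then show "dist_set \<delta> (region width W0 b0 W b ?C) = dist_set \<delta> (region width W0 b0 W b P)"
    using dist_set_eq_minimum[of q _ \<delta>, OF q] by simp
  have "hvertex L width W0 b0 W b ?C"
    using assms(1,2) qC unfolding child_pattern_def hvertex_snoc
    by (auto simp: hvertex_def is_pattern_iff sign_vector_sign_pattern)
  moreover have "dist_set \<delta> (region width W0 b0 W b ?C) \<le> dist_set \<delta> (region width W0 b0 W b C)"
    if "hvertex L width W0 b0 W b C" "butlast C = P" "2 \<le> length C" for C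
  proof -
    have "C = P @ [last C]"
      using that by (metis append_butlast_last_id list.size(3) not_numeral_le_zero)
    then have "region width W0 b0 W b C \<subseteq> region width W0 b0 W b P" using sub by metis
    moreover have "region width W0 b0 W b C \<noteq> {}" using that(1) by (simp add: hvertex_def)
    ultimately show ?thesis unfolding dist_C using q(2) by (blast intro: dist_set_greatest)
  qed
  moreover have "2 \<le> length ?C"
    using assms(1) by (simp add: child_pattern_def hvertex_def is_pattern_def)
  ultimately show "tree_edge L width W0 b0 W b \<delta> P ?C"
    using assms(1) unfolding tree_edge_def by (auto simp: child_pattern_def)
qed

lemma ascending_children_path:
  assumes P: "length P < L" "pattern_valid width P"
    and \<delta>: "convex_on UNIV \<delta>" "continuous_on UNIV \<delta>" "\<And>c. bounded {v. \<delta> v \<le> c}"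
    and q: "q \<in> region width W0 b0 W b P" "\<And>v. v \<in> region width W0 b0 W b P \<Longrightarrow> \<delta> q \<le> \<delta> v"
    and c: "sign_vector (width (Suc (length P))) c" "region width W0 b0 W b (P @ [c]) \<noteq> {}"
  shows "\<exists>p. ascending_path p \<and> hd p = child_pattern width W0 b0 W b P q \<and> last p = P @ [c]"
proof -
  let ?w = "width (Suc (length P))" and ?z = "preact width W0 b0 W b (Suc (length P))"
  let ?R = "region width W0 b0 W b"
  interpret affine_sign_arrangement "?R P" ?z ?w \<delta> q
    using affine_sign_arrangement_region[OF P(2) \<delta> q] .
  obtain cs where cs: "cs \<noteq> []" "hd cs = sign_pattern ?z ?w q" "last cs = c"
    "\<forall>c\<in>set cs. sign_vector ?w c \<and> sign_cell (?R P) ?z ?w c \<noteq> {}"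
    "successively ascending_flip cs"
    using ascending_flip_path[OF c(1) c(2)[unfolded region_snoc]] by (elim exE conjE)
  have vertex: "hvertex L width W0 b0 W b (P @ [c'])" if "c' \<in> set cs" for c'
    using cs(4) that P by (auto simp: hvertex_snoc region_snoc)
  have "successively (\<lambda>c c'. hedge L width W0 b0 W b \<delta> (P @ [c]) (P @ [c']) \<and>
      dist_set \<delta> (?R (P @ [c])) \<le> dist_set \<delta> (?R (P @ [c']))) cs"
    using cs(5) by (rule successively_mono)
      (auto simp: ascending_flip_def hedge_def neighboring_siblings_snoc region_snoc vertex)
  then have "ascending_path (map (\<lambda>c. P @ [c]) cs)"
    using cs(1) vertex unfolding ascending_path_def successively_map by auto
  moreover have "hd (map (\<lambda>c. P @ [c]) cs) = child_pattern width W0 b0 W b P q"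
    using cs(1,2) by (simp add: hd_map child_pattern_def)
  moreover have "last (map (\<lambda>c. P @ [c]) cs) = P @ [c]"
    using cs(1,3) by (simp add: last_map)
  ultimately show ?thesis by blast
qed

lemma ascending_path_from_input:
  assumes \<delta>: "convex_distance_function \<delta> x"
  shows "is_pattern L width A \<Longrightarrow> region width W0 b0 W b A \<noteq> {} \<Longrightarrow>
    \<exists>p. ascending_path p \<and> hd p = pattern1_of width W0 b0 W b x \<and> last p = A"
proof (induction A rule: rev_induct)
  case Nil
  then show ?case by (simp add: is_pattern_def)
next
  case (snoc c P)
  let ?R = "region width W0 b0 W b"
  have \<delta>': "convex_on UNIV \<delta>" "continuous_on UNIV \<delta>" "\<And>c. bounded {v. \<delta> v \<le> c}"
    using \<delta> by (auto simp: convex_distance_function_def)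
  have P: "length P < L" "pattern_valid width P" and c: "sign_vector (width (Suc (length P))) c"
    using snoc.prems(1) by (auto simp: is_pattern_iff pattern_valid_snoc)
  have ne: "?R P \<noteq> {}" using snoc.prems(2) unfolding region_snoc sign_cell_def by auto
  show ?case
  proof (cases "P = []")
    case True
    have "\<delta> x \<le> \<delta> v" for v using \<delta> by (simp add: convex_distance_function_def)
    then show ?thesis
      using ascending_children_path[OF P \<delta>', of x c] c snoc.prems(2) True
      by (simp add: region_Nil pattern1_of_eq_child_pattern)
  next
    case False
    then have pat: "is_pattern L width P" using P by (simp add: is_pattern_iff Suc_le_eq)
    obtain p0 where p0: "ascending_path p0" "hd p0 = pattern1_of width W0 b0 W b x" "last p0 = P"
      using snoc.IH[OF pat ne] by (elim exE conjE)
    obtain q where q: "q \<in> ?R P" "\<And>v. v \<in> ?R P \<Longrightarrow> \<delta> q \<le> \<delta> v"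
      using coercive_attains_min_on_closed[OF closed_region ne \<delta>'(2,3)] by (elim bexE) blast
    have "\<exists>ps. ascending_path ps \<and> hd ps = child_pattern width W0 b0 W b P q \<and> last ps = P @ [c]"
      using P \<delta>' q c snoc.prems(2) by (rule ascending_children_path)
    then obtain ps where ps: "ascending_path ps" "hd ps = child_pattern width W0 b0 W b P q"
        "last ps = P @ [c]"
      by (elim exE conjE)
    have "hvertex L width W0 b0 W b P" using pat ne by (simp add: hvertex_def)
    from tree_edge_child_pattern[OF this P(1) q] have "ascending_path (p0 @ ps)"
      using p0 ps by (intro ascending_path_append) (auto simp: hedge_def)
    moreover have "p0 \<noteq> []" "ps \<noteq> []" using p0(1) ps(1) by (simp_all add: ascending_path_def)
    ultimately show ?thesis using p0(2) ps(3) by (intro exI[of _ "p0 @ ps"]) simp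
  qed
qed

end

theorem mainTheorem5:
  fixes L :: nat and width :: "nat \<Rightarrow> nat"
    and W0 :: "nat \<Rightarrow> real^'n" and b0 :: "nat \<Rightarrow> real"
    and W :: "nat \<Rightarrow> nat \<Rightarrow> nat \<Rightarrow> real" and b :: "nat \<Rightarrow> nat \<Rightarrow> real"
    and x :: "real^'n" and \<delta> :: "real^'n \<Rightarrow> real"
    and A :: "(nat \<Rightarrow> int) list"
  assumes "1 \<le> L"
    and "convex_distance_function \<delta> x"
    and "is_pattern L width A"
    and "region width W0 b0 W b A \<noteq> {}"
  shows "\<exists>p. hpath L width W0 b0 W b \<delta> p \<and>
           hd p = pattern1_of width W0 b0 W b x \<and> last p = A \<and>
           (\<forall>i. Suc i < length p \<longrightarrow>
              dist_set \<delta> (region width W0 b0 W b (p ! i))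
                \<le> dist_set \<delta> (region width W0 b0 W b (p ! Suc i)))"
proof -
  obtain p where "ascending_path L width W0 b0 W b \<delta> p"
      "hd p = pattern1_of width W0 b0 W b x" "last p = A"
    using ascending_path_from_input[OF assms(2-4)] by (elim exE conjE)
  then show ?thesis unfolding ascending_path_def hpath_def successively_conv_nth by blast
qed

end
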